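(* Fix $c>0$, $0\le\alpha\le1$, put $t=\lfloor cn^\alpha\rfloor$ and assume $1\le t\le \frac{n+1}{2}$. Let $M$ be a $t$-matching in $K_{n+1}$ and let $P_M$ be as in the context. Then the largest eigenvalue of $P_M$ is $$\mu_m=\frac{3n-7+\sqrt{n^2+6n+9-16t}}{4(n-1)},$$ and, as $n\to\infty$, $1-\mu_m=\Theta(n^{\alpha-2})$ (indeed $1-\mu_m=2cn^{\alpha-2}(1+o(1))$ when $t\sim cn^\alpha$), so that $\frac{1}{1-\mu_m}$, which governs the expected hitting time of $M$ for the simple random walk on edges, is of order $n^{2-\alpha}$.
   Context: $K_{n+1}$ is the complete graph on vertex set $V$, $|V|=n+1$, edge set $E$. A $t$-matching is a set of $t$ pairwise vertex-disjoint edges. $P$ is the matrix on $\mathbb{C}^E$ with $P_{e,f}=\frac{1}{2(n-1)}$ if $e\ne f$ share an endpoint and $0$ otherwise (transition matrix of the simple random walk on edges), and $P_M$ is the principal submatrix of $P$ obtained by deleting the rows and columns indexed by edges of $M$. *)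

theory Defs
  imports "HOL-Analysis.Analysis" "HOL-Library.Landau_Symbols"
begin

definition Kedges :: "nat \<Rightarrow> nat set set" where
  "Kedges n = {e. \<exists>u v. u \<le> n \<and> v \<le> n \<and> u \<noteq> v \<and> e = {u, v}}"

definition is_matching :: "nat \<Rightarrow> nat \<Rightarrow> nat set set \<Rightarrow> bool" where
  "is_matching n t M \<longleftrightarrow> M \<subseteq> Kedges n \<and> card M = t \<and>
     (\<forall>e\<in>M. \<forall>f\<in>M. e \<noteq> f \<longrightarrow> e \<inter> f = {})"

text \<open>Transition matrix of the simple random walk on edges of K_{n+1}.\<close>
definition Pmat :: "nat \<Rightarrow> nat set \<Rightarrow> nat set \<Rightarrow> complex" where
  "Pmat n e f = (if e \<noteq> f \<and> e \<inter> f \<noteq> {} then 1 / (2 * (of_nat n - 1)) else 0)"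

definition eigenvalue_on :: "'i set \<Rightarrow> ('i \<Rightarrow> 'i \<Rightarrow> complex) \<Rightarrow> complex \<Rightarrow> bool" where
  "eigenvalue_on S A lam \<longleftrightarrow> (\<exists>x. (\<exists>e\<in>S. x e \<noteq> 0) \<and>
     (\<forall>e\<in>S. (\<Sum>f\<in>S. A e f * x f) = lam * x e))"

definition largest_eigenvalue_on :: "'i set \<Rightarrow> ('i \<Rightarrow> 'i \<Rightarrow> complex) \<Rightarrow> real \<Rightarrow> bool" where
  "largest_eigenvalue_on S A \<mu> \<longleftrightarrow> eigenvalue_on S A (complex_of_real \<mu>) \<and>
     (\<forall>lam. eigenvalue_on S A lam \<longrightarrow> lam \<in> \<real> \<and> Re lam \<le> \<mu>)"

definition mu_m :: "nat \<Rightarrow> nat \<Rightarrow> real" where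
  "mu_m n t = (3 * real n - 7 + sqrt (real n ^ 2 + 6 * real n + 9 - 16 * real t)) / (4 * (real n - 1))"

end

(* Give a vertex the weight \<alpha> = (s - n - 3 + 4t) / 2, where s = sqrt ((n + 3)\<^sup>2 - 16t), if M covers it
   and the weight 2t otherwise, and give an edge the sum of the weights of its ends. Counting the edges
   of K_{n+1} - M adjacent to {x, y} shows that this vector v satisfies P_M v = \<mu>_m v as soon as
   (\<alpha>, 2t) is an eigenvector, with eigenvalue 2(n - 1) \<mu>_m, of the 2 x 2 quotient matrix of the
   partition of the vertices into covered and uncovered ones, and \<mu>_m is exactly its Perron root.
   Since v is positive and P_M is symmetric and nonnegative, the Collatz-Wielandt argument shows that
   \<mu>_m dominates every eigenvalue. Rationalising, 1 - \<mu>_m = 4t / ((n - 1)(n + 3 + s)), which lies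
   between t/n\<^sup>2 and 8t/n\<^sup>2 and is asymptotic to 2t/n\<^sup>2 once t = o(n\<^sup>2). *)

theory Submission
  imports Defs
begin

section \<open>Perron eigenvectors of symmetric nonnegative matrices\<close>

lemma eigenvalue_on_symmetric_real:
  fixes A :: "'i \<Rightarrow> 'i \<Rightarrow> real"
  assumes "finite S" and sym: "\<And>e f. e \<in> S \<Longrightarrow> f \<in> S \<Longrightarrow> A e f = A f e"
    and "eigenvalue_on S (\<lambda>e f. complex_of_real (A e f)) lam"
  shows "lam \<in> \<real>"
proof -
  from assms(3) obtain x where nz: "\<exists>e\<in>S. x e \<noteq> 0"
    and eq: "\<And>e. e \<in> S \<Longrightarrow> (\<Sum>f\<in>S. complex_of_real (A e f) * x f) = lam * x e"
    unfolding eigenvalue_on_def by blast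
  define Q where "Q = (\<Sum>e\<in>S. \<Sum>f\<in>S. complex_of_real (A e f) * x f * cnj (x e))"
  define N where "N = (\<Sum>e\<in>S. (cmod (x e))\<^sup>2)"
  have "Q = (\<Sum>e\<in>S. lam * x e * cnj (x e))"
    unfolding Q_def by (intro sum.cong) (simp_all flip: sum_distrib_right add: eq)
  also have "\<dots> = lam * complex_of_real N"
    unfolding N_def of_real_sum sum_distrib_left
    by (simp add: mult.assoc del: of_real_power flip: complex_norm_square)
  finally have Q_eq: "Q = lam * complex_of_real N" .
  have "cnj Q = (\<Sum>e\<in>S. \<Sum>f\<in>S. complex_of_real (A f e) * x e * cnj (x f))"
    unfolding Q_def by (simp add: cnj_sum sym mult_ac)
  also have "\<dots> = Q"
    unfolding Q_def by (rule sum.swap)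
  finally have "cnj Q = Q" .
  obtain e0 where "e0 \<in> S" "x e0 \<noteq> 0" using nz by blast
  with assms(1) have "N > 0"
    unfolding N_def by (intro sum_pos2[of _ e0]) auto
  with Q_eq \<open>cnj Q = Q\<close> have "cnj lam = lam"
    by (metis complex_cnj_complex_of_real complex_cnj_mult mult_cancel_right of_real_eq_0_iff less_irrefl)
  then show ?thesis by (simp add: Reals_cnj_iff)
qed

text \<open>Collatz--Wielandt: evaluate the eigenvalue equation at an index where \<open>|x| / v\<close> is maximal.\<close>

lemma eigenvalue_on_norm_le_positive_eigenvector:
  fixes A :: "'i \<Rightarrow> 'i \<Rightarrow> real" and v :: "'i \<Rightarrow> real"
  assumes "finite S" and nonneg: "\<And>e f. e \<in> S \<Longrightarrow> f \<in> S \<Longrightarrow> A e f \<ge> 0"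
    and v_pos: "\<And>e. e \<in> S \<Longrightarrow> v e > 0"
    and v_eigen: "\<And>e. e \<in> S \<Longrightarrow> (\<Sum>f\<in>S. A e f * v f) = \<mu> * v e"
    and "eigenvalue_on S (\<lambda>e f. complex_of_real (A e f)) lam"
  shows "cmod lam \<le> \<mu>"
proof -
  from assms(5) obtain x where nz: "\<exists>e\<in>S. x e \<noteq> 0"
    and eq: "\<And>e. e \<in> S \<Longrightarrow> (\<Sum>f\<in>S. complex_of_real (A e f) * x f) = lam * x e"
    unfolding eigenvalue_on_def by blast
  define r where "r = Max ((\<lambda>e. cmod (x e) / v e) ` S)"
  have r_ge: "cmod (x e) / v e \<le> r" if "e \<in> S" for e
    unfolding r_def using assms(1) that by (intro Max_ge) auto
  obtain e0 where e0: "e0 \<in> S" "r = cmod (x e0) / v e0"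
    unfolding r_def using Max_in[of "(\<lambda>e. cmod (x e) / v e) ` S"] assms(1) nz by fastforce
  obtain e1 where e1: "e1 \<in> S" "x e1 \<noteq> 0" using nz by blast
  have "0 < cmod (x e1) / v e1" using e1 v_pos by simp
  also have "\<dots> \<le> cmod (x e0) / v e0" using r_ge[OF e1(1)] e0(2) by simp
  finally have x0: "cmod (x e0) > 0" using v_pos[OF e0(1)] by (simp add: zero_less_divide_iff)
  have "cmod lam * cmod (x e0) = cmod (\<Sum>f\<in>S. complex_of_real (A e0 f) * x f)"
    using eq[OF e0(1)] by (simp add: norm_mult)
  also have "\<dots> \<le> (\<Sum>f\<in>S. cmod (complex_of_real (A e0 f) * x f))"
    by (rule norm_sum)
  also have "\<dots> = (\<Sum>f\<in>S. A e0 f * cmod (x f))"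
    using nonneg[OF e0(1)] by (simp add: norm_mult)
  also have "\<dots> \<le> (\<Sum>f\<in>S. A e0 f * (r * v f))"
    using r_ge v_pos nonneg[OF e0(1)]
    by (intro sum_mono mult_left_mono) (auto simp: divide_le_eq)
  also have "\<dots> = r * (\<Sum>f\<in>S. A e0 f * v f)"
    by (simp add: sum_distrib_left mult_ac)
  also have "\<dots> = r * (\<mu> * v e0)"
    using v_eigen[OF e0(1)] by simp
  also have "\<dots> = \<mu> * cmod (x e0)"
    using e0 v_pos[OF e0(1)] by simp
  finally show ?thesis using x0 by simp
qed

lemma largest_eigenvalue_on_positive_eigenvector:
  fixes A :: "'i \<Rightarrow> 'i \<Rightarrow> real" and v :: "'i \<Rightarrow> real"
  assumes "finite S" and "S \<noteq> {}"
    and "\<And>e f. e \<in> S \<Longrightarrow> f \<in> S \<Longrightarrow> A e f = A f e"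
    and "\<And>e f. e \<in> S \<Longrightarrow> f \<in> S \<Longrightarrow> A e f \<ge> 0"
    and "\<And>e. e \<in> S \<Longrightarrow> v e > 0"
    and "\<And>e. e \<in> S \<Longrightarrow> (\<Sum>f\<in>S. A e f * v f) = \<mu> * v e"
  shows "largest_eigenvalue_on S (\<lambda>e f. complex_of_real (A e f)) \<mu>"
  unfolding largest_eigenvalue_on_def
proof (intro conjI allI impI)
  show "eigenvalue_on S (\<lambda>e f. complex_of_real (A e f)) (complex_of_real \<mu>)"
    unfolding eigenvalue_on_def using assms(2,5,6)
    by (intro exI[of _ "\<lambda>e. complex_of_real (v e)"])
      (force simp flip: of_real_mult of_real_sum)
next
  fix lam assume ev: "eigenvalue_on S (\<lambda>e f. complex_of_real (A e f)) lam"
  show "lam \<in> \<real>"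
    using eigenvalue_on_symmetric_real[OF assms(1,3) ev] .
  show "Re lam \<le> \<mu>"
    using eigenvalue_on_norm_le_positive_eigenvector[OF assms(1,4,5,6) ev] complex_Re_le_cmod
    by (rule order_trans[rotated])
qed

section \<open>Edges of the complete graph and matchings\<close>

lemma finite_Kedges: "finite (Kedges n)"
  by (rule finite_subset[of _ "Pow {0..n}"]) (auto simp: Kedges_def)

lemma doubleton_in_Kedges_iff: "{x, y} \<in> Kedges n \<longleftrightarrow> x \<le> n \<and> y \<le> n \<and> x \<noteq> y"
  unfolding Kedges_def by (auto simp: doubleton_eq_iff)

lemma KedgesE:
  assumes "e \<in> Kedges n"
  obtains x y where "x \<le> n" "y \<le> n" "x \<noteq> y" "e = {x, y}"
  using assms unfolding Kedges_def by blast

lemma Kedges_adjacent_eq: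
  assumes "x \<le> n" "y \<le> n" "x \<noteq> y"
  shows "{f \<in> Kedges n - M. {x, y} \<noteq> f \<and> {x, y} \<inter> f \<noteq> {}} =
     (\<lambda>z. {x, z}) ` {z. z \<le> n \<and> z \<noteq> x \<and> z \<noteq> y \<and> {x, z} \<notin> M} \<union>
     (\<lambda>z. {y, z}) ` {z. z \<le> n \<and> z \<noteq> x \<and> z \<noteq> y \<and> {y, z} \<notin> M}"
  (is "?L = ?R")
proof
  show "?L \<subseteq> ?R"
  proof
    fix f assume f: "f \<in> ?L"
    then obtain u v where uv: "u \<le> n" "v \<le> n" "u \<noteq> v" "f = {u, v}"
      by (blast elim: KedgesE)
    with f have "{u, v} \<noteq> {x, y}" "u \<in> {x, y} \<or> v \<in> {x, y}" "{u, v} \<notin> M" by auto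
    with uv show "f \<in> ?R"
      by (auto simp: insert_commute image_iff doubleton_eq_iff)
  qed
  show "?R \<subseteq> ?L"
    using assms by (auto simp: doubleton_in_Kedges_iff doubleton_eq_iff)
qed

lemma sum_Kedges_adjacent:
  fixes g :: "nat set \<Rightarrow> real"
  assumes "x \<le> n" "y \<le> n" "x \<noteq> y"
  shows "(\<Sum>f\<in>Kedges n - M. (if {x, y} \<noteq> f \<and> {x, y} \<inter> f \<noteq> {} then a else 0) * g f) =
     a * ((\<Sum>z | z \<le> n \<and> z \<noteq> x \<and> z \<noteq> y \<and> {x, z} \<notin> M. g {x, z}) +
          (\<Sum>z | z \<le> n \<and> z \<noteq> x \<and> z \<noteq> y \<and> {y, z} \<notin> M. g {y, z}))"
proof -
  let ?Nx = "{z. z \<le> n \<and> z \<noteq> x \<and> z \<noteq> y \<and> {x, z} \<notin> M}"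
  let ?Ny = "{z. z \<le> n \<and> z \<noteq> x \<and> z \<noteq> y \<and> {y, z} \<notin> M}"
  have "(\<Sum>f\<in>Kedges n - M. (if {x, y} \<noteq> f \<and> {x, y} \<inter> f \<noteq> {} then a else 0) * g f)
      = (\<Sum>f\<in>{f \<in> Kedges n - M. {x, y} \<noteq> f \<and> {x, y} \<inter> f \<noteq> {}}. a * g f)"
    using finite_Kedges[of n] by (simp only: sum.inter_filter finite_Diff) (rule sum.cong; simp)
  also have "\<dots> = (\<Sum>f\<in>(\<lambda>z. {x, z}) ` ?Nx. a * g f) + (\<Sum>f\<in>(\<lambda>z. {y, z}) ` ?Ny. a * g f)"
    unfolding Kedges_adjacent_eq[OF assms]
    by (rule sum.union_disjoint) (use assms in \<open>auto simp: doubleton_eq_iff\<close>)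
  also have "\<dots> = (\<Sum>z\<in>?Nx. a * g {x, z}) + (\<Sum>z\<in>?Ny. a * g {y, z})"
    by (subst (1 2) sum.reindex) (auto simp: inj_on_def doubleton_eq_iff)
  finally show ?thesis by (simp add: sum_distrib_left distrib_left)
qed

lemma Kedges_minus_matching_nonempty:
  assumes "2 \<le> n" "is_matching n t M"
  shows "Kedges n - M \<noteq> {}"
proof -
  have "{0, 1} \<notin> M \<or> {0, 2::nat} \<notin> M"
    using assms(2) unfolding is_matching_def by fastforce
  moreover have "{0, 1} \<in> Kedges n" "{0, 2} \<in> Kedges n"
    using assms(1) by (simp_all add: doubleton_in_Kedges_iff)
  ultimately show ?thesis by blast
qed

lemma card_Union_matching:
  assumes "is_matching n t M"
  shows "card (\<Union>M) = 2 * t"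
proof -
  have card_edge: "card f = 2" if "f \<in> M" for f
    using that assms unfolding is_matching_def by (auto elim!: KedgesE)
  have "card (\<Union>M) = sum card M"
  proof (rule card_Union_disjoint)
    show "pairwise disjnt M"
      using assms unfolding is_matching_def pairwise_def disjnt_def by blast
    show "finite f" if "f \<in> M" for f
      using card_edge[OF that] by (simp add: card_ge_0_finite)
  qed
  also have "\<dots> = 2 * t"
    using assms card_edge unfolding is_matching_def by simp
  finally show ?thesis .
qed

lemma matching_partners_subset:
  assumes "is_matching n t M"
  shows "{z. {x, z} \<in> M} \<subseteq> \<Union>M \<inter> {0..n} - {x}"
proof
  fix z assume "z \<in> {z. {x, z} \<in> M}"
  then have "{x, z} \<in> M" "{x, z} \<in> Kedges n"
    using assms unfolding is_matching_def by auto
  then show "z \<in> \<Union>M \<inter> {0..n} - {x}"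
    by (auto simp: doubleton_in_Kedges_iff)
qed

lemma card_matching_partners:
  assumes "is_matching n t M"
  shows "card {z. {x, z} \<in> M} = (if x \<in> \<Union>M then 1 else 0)"
proof -
  have disj: "\<forall>e\<in>M. \<forall>f\<in>M. e \<noteq> f \<longrightarrow> e \<inter> f = {}"
    using assms unfolding is_matching_def by simp
  have unique: "a = b" if "{x, a} \<in> M" "{x, b} \<in> M" for a b
  proof -
    have "{x, a} = {x, b}"
    proof (rule ccontr)
      assume "{x, a} \<noteq> {x, b}"
      with disj that have "{x, a} \<inter> {x, b} = {}" by (intro disj[rule_format])
      then show False by simp
    qed
    moreover have "a \<noteq> x" "b \<noteq> x"
      using that matching_partners_subset[OF assms, of x] by auto
    ultimately show ?thesis by (auto simp: doubleton_eq_iff)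
  qed
  show ?thesis
  proof (cases "x \<in> \<Union>M")
    case True
    then obtain f where "f \<in> M" "x \<in> f" by blast
    moreover have "f \<in> Kedges n"
      using \<open>f \<in> M\<close> assms unfolding is_matching_def by blast
    then obtain u v where "f = {u, v}" by (rule KedgesE)
    ultimately obtain a where "{x, a} \<in> M" by (auto simp: insert_commute)
    with unique have "{z. {x, z} \<in> M} = {a}" by blast
    with True show ?thesis by simp
  next
    case False
    then have "{z. {x, z} \<in> M} = {}" by blast
    with False show ?thesis by simp
  qed
qed

lemma sum_nonmatching_neighbours:
  fixes p :: "nat \<Rightarrow> real"
  assumes "is_matching n t M" "x \<le> n" "y \<le> n" "x \<noteq> y" "{x, y} \<notin> M"
  shows "(\<Sum>z | z \<le> n \<and> z \<noteq> x \<and> z \<noteq> y \<and> {x, z} \<notin> M. p x + p z) =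
    (real n - 1 - real (card {z. {x, z} \<in> M})) * p x + (\<Sum>z\<le>n. p z) - p x - p y
      - (\<Sum>z | {x, z} \<in> M. p z)"
proof -
  let ?P = "{z. {x, z} \<in> M}"
  let ?E = "{x, y} \<union> ?P"
  have P_sub: "?P \<subseteq> {..n} - {x, y}"
    using matching_partners_subset[OF assms(1), of x] assms(5) by auto
  then have "finite ?P" by (rule finite_subset) simp
  have "x \<notin> ?P" "y \<notin> ?P" using P_sub by blast+
  have E_sub: "?E \<subseteq> {..n}" using P_sub assms(2,3) by auto
  have card_E: "card ?E = 2 + card ?P"
    using \<open>finite ?P\<close> \<open>x \<notin> ?P\<close> \<open>y \<notin> ?P\<close> assms(4) by (subst card_Un_disjoint) auto
  have sum_E: "(\<Sum>z\<in>?E. p z) = p x + p y + (\<Sum>z\<in>?P. p z)"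
    using \<open>finite ?P\<close> \<open>x \<notin> ?P\<close> \<open>y \<notin> ?P\<close> assms(4) by (subst sum.union_disjoint) auto
  have "{z. z \<le> n \<and> z \<noteq> x \<and> z \<noteq> y \<and> {x, z} \<notin> M} = {..n} - ?E" by auto
  then have "(\<Sum>z | z \<le> n \<and> z \<noteq> x \<and> z \<noteq> y \<and> {x, z} \<notin> M. p x + p z)
      = real (card ({..n} - ?E)) * p x + ((\<Sum>z\<le>n. p z) - (\<Sum>z\<in>?E. p z))"
    using E_sub by (simp add: sum.distrib sum_diff)
  also have "card ({..n} - ?E) = Suc n - (2 + card ?P)"
    using card_Diff_subset[OF _ E_sub] \<open>finite ?P\<close> card_E by simp
  then have "real (card ({..n} - ?E)) = real n - 1 - real (card ?P)"
    using card_mono[OF _ E_sub] card_E by (simp add: of_nat_diff)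
  finally show ?thesis unfolding sum_E by (simp add: algebra_simps)
qed

section \<open>The positive eigenvector of \<open>P\<^sub>M\<close>\<close>

definition matched_weight :: "nat \<Rightarrow> nat \<Rightarrow> real" where
  "matched_weight n t =
     (sqrt (real n ^ 2 + 6 * real n + 9 - 16 * real t) - real n - 3 + 4 * real t) / 2"

definition vertex_weight :: "nat \<Rightarrow> nat \<Rightarrow> nat set set \<Rightarrow> nat \<Rightarrow> real" where
  "vertex_weight n t M z = (if z \<in> \<Union>M then matched_weight n t else 2 * real t)"

lemma mu_m_radicand_nonneg:
  fixes n t :: real
  assumes "2 * t \<le> n + 1"
  shows "16 * t \<le> (n + 3)\<^sup>2"
proof -
  have "(n + 3)\<^sup>2 = 8 * n + 8 + (n - 1)\<^sup>2"
    by (simp add: power2_eq_square algebra_simps)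
  with assms zero_le_power2[of "n - 1"] show ?thesis by linarith
qed

lemma matched_weight_pos:
  assumes "2 \<le> n" "1 \<le> t" "2 * real t \<le> real n + 1"
  shows "0 < matched_weight n t"
proof (cases "2 * t = n + 1")
  case True
  then have "real n ^ 2 + 6 * real n + 9 - 16 * real t = (real n - 1) ^ 2"
    by (simp add: power2_eq_square algebra_simps flip: of_nat_add of_nat_mult)
  with True assms show ?thesis unfolding matched_weight_def
    by (simp flip: of_nat_add of_nat_mult)
next
  case False
  then have "0 < 8 * real t * (real n + 1 - 2 * real t)"
    using assms by (simp flip: of_nat_add of_nat_mult)
  moreover have "real n ^ 2 + 6 * real n + 9 - 16 * real t
      = (real n + 3 - 4 * real t) ^ 2 + 8 * real t * (real n + 1 - 2 * real t)"
    by (simp add: power2_eq_square algebra_simps)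
  ultimately have "sqrt ((real n + 3 - 4 * real t) ^ 2)
      < sqrt (real n ^ 2 + 6 * real n + 9 - 16 * real t)"
    by (intro real_sqrt_less_mono) linarith
  then have "real n + 3 - 4 * real t < sqrt (real n ^ 2 + 6 * real n + 9 - 16 * real t)"
    unfolding real_sqrt_abs by linarith
  then show ?thesis unfolding matched_weight_def by simp
qed

text \<open>\<open>P\<close> is the total vertex weight (\<open>sum_vertex_weight\<close>); the two identities are the
  eigenvector equations of the quotient matrix for \<open>(matched_weight n t, 2t)\<close>.\<close>

lemma matched_weight_quotient_eigen:
  assumes "2 \<le> n" "2 * real t \<le> real n + 1"
  defines "P \<equiv> 2 * real t * matched_weight n t + (real n + 1 - 2 * real t) * (2 * real t)"
  shows "(real n - 5) * matched_weight n t + P = 2 * (real n - 1) * mu_m n t * matched_weight n t"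
    and "(real n - 3) * (2 * real t) + P = 2 * (real n - 1) * mu_m n t * (2 * real t)"
proof -
  define s where "s = sqrt (real n ^ 2 + 6 * real n + 9 - 16 * real t)"
  have "0 \<le> real n ^ 2 + 6 * real n + 9 - 16 * real t"
    using mu_m_radicand_nonneg[OF assms(2)] by (simp add: power2_eq_square algebra_simps)
  then have s2: "s\<^sup>2 = real n ^ 2 + 6 * real n + 9 - 16 * real t"
    unfolding s_def by simp
  have mu: "2 * (real n - 1) * mu_m n t = (3 * real n - 7 + s) / 2"
    using assms(1) unfolding mu_m_def s_def by (simp add: field_simps)
  have \<alpha>: "matched_weight n t = (s - real n - 3 + 4 * real t) / 2"
    unfolding matched_weight_def s_def ..
  show "(real n - 5) * matched_weight n t + P = 2 * (real n - 1) * mu_m n t * matched_weight n t"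
    unfolding mu P_def \<alpha> using s2 by (simp add: field_simps power2_eq_square)
  show "(real n - 3) * (2 * real t) + P = 2 * (real n - 1) * mu_m n t * (2 * real t)"
    unfolding mu P_def \<alpha> by (simp add: field_simps)
qed

lemma sum_vertex_weight:
  assumes "is_matching n t M"
  shows "(\<Sum>z\<le>n. vertex_weight n t M z)
    = 2 * real t * matched_weight n t + (real n + 1 - 2 * real t) * (2 * real t)"
proof -
  have W_sub: "\<Union>M \<subseteq> {..n}"
    using assms unfolding is_matching_def by (auto simp: Kedges_def)
  then have "finite (\<Union>M)" by (rule finite_subset) simp
  have "(\<Sum>z\<le>n. vertex_weight n t M z)
      = (\<Sum>z\<in>\<Union>M. vertex_weight n t M z) + (\<Sum>z\<in>{..n} - \<Union>M. vertex_weight n t M z)"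
    using W_sub by (simp add: sum.subset_diff add.commute)
  also have "\<dots> = real (card (\<Union>M)) * matched_weight n t
      + real (card ({..n} - \<Union>M)) * (2 * real t)"
    by (simp add: vertex_weight_def)
  also have "real (card ({..n} - \<Union>M)) = real n + 1 - real (card (\<Union>M))"
    using W_sub \<open>finite (\<Union>M)\<close> card_mono[OF _ W_sub]
    by (simp add: card_Diff_subset of_nat_diff)
  finally show ?thesis by (simp add: card_Union_matching[OF assms])
qed

lemma sum_vertex_weight_nonmatching_neighbours:
  assumes "2 \<le> n" "2 * real t \<le> real n + 1" "is_matching n t M"
    and "x \<le> n" "y \<le> n" "x \<noteq> y" "{x, y} \<notin> M"
  defines "p \<equiv> vertex_weight n t M"
  shows "(\<Sum>z | z \<le> n \<and> z \<noteq> x \<and> z \<noteq> y \<and> {x, z} \<notin> M. p x + p z)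
    = 2 * (real n - 1) * mu_m n t * p x + p x - p y"
proof -
  let ?\<alpha> = "matched_weight n t" and ?P = "\<lambda>z. {x, z} \<in> M"
  have "(\<Sum>z | ?P z. p z) = (\<Sum>z | ?P z. ?\<alpha>)"
    unfolding p_def vertex_weight_def by (intro sum.cong) auto
  then have partners: "(\<Sum>z | ?P z. p z) = real (card {z. ?P z}) * ?\<alpha>"
    by simp
  have "(\<Sum>z | z \<le> n \<and> z \<noteq> x \<and> z \<noteq> y \<and> {x, z} \<notin> M. p x + p z)
      = (real n - 1 - real (card {z. ?P z})) * p x + (\<Sum>z\<le>n. p z) - p x - p y
        - real (card {z. ?P z}) * ?\<alpha>"
    unfolding partners[symmetric] by (rule sum_nonmatching_neighbours[OF assms(3-7)])
  also have "\<dots> = 2 * (real n - 1) * mu_m n t * p x + p x - p y"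
    using matched_weight_quotient_eigen[OF assms(1,2)]
    unfolding card_matching_partners[OF assms(3)] p_def sum_vertex_weight[OF assms(3)]
    by (simp add: vertex_weight_def algebra_simps)
  finally show ?thesis .
qed

lemma Re_Pmat: "Re (Pmat n e f) = (if e \<noteq> f \<and> e \<inter> f \<noteq> {} then 1 / (2 * (real n - 1)) else 0)"
  unfolding Pmat_def by simp

lemma Pmat_real: "Pmat n e f = complex_of_real (Re (Pmat n e f))"
  unfolding Pmat_def by simp

lemma vertex_weight_edge_eigen:
  assumes "2 \<le> n" "2 * real t \<le> real n + 1" "is_matching n t M" "e \<in> Kedges n - M"
  defines "v \<equiv> sum (vertex_weight n t M)"
  shows "(\<Sum>f\<in>Kedges n - M. Re (Pmat n e f) * v f) = mu_m n t * v e"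
proof -
  obtain x y where xy: "x \<le> n" "y \<le> n" "x \<noteq> y" "e = {x, y}"
    using assms(4) by (blast elim: KedgesE)
  let ?p = "vertex_weight n t M"
  have v: "v {u, z} = ?p u + ?p z" if "u \<noteq> z" for u z
    using that unfolding v_def by simp
  have "(\<Sum>f\<in>Kedges n - M. Re (Pmat n e f) * v f)
      = 1 / (2 * (real n - 1)) *
        ((\<Sum>z | z \<le> n \<and> z \<noteq> x \<and> z \<noteq> y \<and> {x, z} \<notin> M. v {x, z}) +
         (\<Sum>z | z \<le> n \<and> z \<noteq> x \<and> z \<noteq> y \<and> {y, z} \<notin> M. v {y, z}))"
    unfolding xy(4) Re_Pmat by (rule sum_Kedges_adjacent[OF xy(1-3)])
  also have "\<dots> = 1 / (2 * (real n - 1)) *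
        ((\<Sum>z | z \<le> n \<and> z \<noteq> x \<and> z \<noteq> y \<and> {x, z} \<notin> M. ?p x + ?p z) +
         (\<Sum>z | z \<le> n \<and> z \<noteq> y \<and> z \<noteq> x \<and> {y, z} \<notin> M. ?p y + ?p z))"
    by (intro arg_cong2[where f = "\<lambda>a b. _ * (a + b)"] sum.cong) (auto simp: v)
  also have "\<dots> = 1 / (2 * (real n - 1)) *
        ((2 * (real n - 1) * mu_m n t * ?p x + ?p x - ?p y) +
         (2 * (real n - 1) * mu_m n t * ?p y + ?p y - ?p x))"
    using assms(4) xy sum_vertex_weight_nonmatching_neighbours[OF assms(1-3), of x y]
      sum_vertex_weight_nonmatching_neighbours[OF assms(1-3), of y x]
    by (simp add: insert_commute)
  also have "\<dots> = mu_m n t * v e"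
    using assms(1) xy by (simp add: v field_simps)
  finally show ?thesis .
qed

lemma vertex_weight_pos:
  assumes "2 \<le> n" "1 \<le> t" "2 * real t \<le> real n + 1"
  shows "0 < vertex_weight n t M z"
  using matched_weight_pos[OF assms] assms(2) by (simp add: vertex_weight_def)

lemma largest_eigenvalue_on_Kedges_minus_matching:
  assumes "2 \<le> n" "1 \<le> t" "2 * real t \<le> real n + 1" "is_matching n t M"
  shows "largest_eigenvalue_on (Kedges n - M) (Pmat n) (mu_m n t)"
proof -
  have "largest_eigenvalue_on (Kedges n - M) (\<lambda>e f. complex_of_real (Re (Pmat n e f))) (mu_m n t)"
  proof (rule largest_eigenvalue_on_positive_eigenvector)
    show "finite (Kedges n - M)" using finite_Kedges by simp
    show "Kedges n - M \<noteq> {}" by (rule Kedges_minus_matching_nonempty[OF assms(1,4)])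
    show "Re (Pmat n e f) = Re (Pmat n f e)" for e f
      by (auto simp: Re_Pmat Int_commute)
    show "0 \<le> Re (Pmat n e f)" for e f
      using assms(1) by (simp add: Re_Pmat)
    show "0 < sum (vertex_weight n t M) e" if "e \<in> Kedges n - M" for e
      using that vertex_weight_pos[OF assms(1-3)] by (auto elim!: KedgesE simp: add_pos_pos)
    show "(\<Sum>f\<in>Kedges n - M. Re (Pmat n e f) * sum (vertex_weight n t M) f)
        = mu_m n t * sum (vertex_weight n t M) e" if "e \<in> Kedges n - M" for e
      by (rule vertex_weight_edge_eigen[OF assms(1,3,4) that])
  qed
  then show ?thesis by (simp flip: Pmat_real)
qed

section \<open>Asymptotics of the spectral gap\<close>

lemma one_minus_mu_m_eq:
  assumes "2 \<le> n" "16 * real t \<le> (real n + 3)\<^sup>2"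
  shows "1 - mu_m n t
    = 4 * real t / ((real n - 1) * (real n + 3 + sqrt ((real n + 3)\<^sup>2 - 16 * real t)))"
proof -
  define s where "s = sqrt ((real n + 3)\<^sup>2 - 16 * real t)"
  have "s \<ge> 0" "s\<^sup>2 = (real n + 3)\<^sup>2 - 16 * real t"
    using assms(2) unfolding s_def by simp_all
  then have t: "4 * real t = (real n + 3 - s) * (real n + 3 + s) / 4" and "real n + 3 + s > 0"
    by (simp_all add: power2_eq_square algebra_simps)
  have "real n ^ 2 + 6 * real n + 9 - 16 * real t = (real n + 3)\<^sup>2 - 16 * real t"
    by (simp add: power2_eq_square algebra_simps)
  then have "1 - mu_m n t = (real n + 3 - s) / (4 * (real n - 1))"
    using assms(1) unfolding mu_m_def s_def by (simp add: field_simps)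
  also have "\<dots> = (real n + 3 - s) * (real n + 3 + s) / (4 * (real n - 1) * (real n + 3 + s))"
    using \<open>real n + 3 + s > 0\<close> by simp
  also have "\<dots> = 4 * real t / ((real n - 1) * (real n + 3 + s))"
    unfolding t by (simp add: mult.assoc)
  finally show ?thesis unfolding s_def .
qed

lemma one_minus_mu_m_bounds:
  assumes "2 \<le> n" "16 * real t \<le> (real n + 3)\<^sup>2"
  shows "real t / (real n)\<^sup>2 \<le> 1 - mu_m n t" "1 - mu_m n t \<le> 8 * real t / (real n)\<^sup>2"
proof -
  define s where "s = sqrt ((real n + 3)\<^sup>2 - 16 * real t)"
  have s: "0 \<le> s" "s \<le> real n + 3"
    using assms(2) unfolding s_def by (auto intro: real_le_lsqrt)
  have n: "real n \<ge> 2" using assms(1) by simp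
  have "(real n - 1) * (2 * (real n + 3)) = 4 * (real n)\<^sup>2 - 2 * (real n - 1)\<^sup>2 - 4"
    "(real n - 1) * (real n + 3) = (real n)\<^sup>2 + 2 * real n - 3"
    by (simp_all add: power2_eq_square algebra_simps)
  moreover have "0 \<le> (real n - 1)\<^sup>2" "4 \<le> (real n)\<^sup>2"
    using n power_mono[of 2 "real n" 2] by simp_all
  ultimately have d: "(real n - 1) * (2 * (real n + 3)) \<le> 4 * (real n)\<^sup>2"
    "(real n)\<^sup>2 / 2 \<le> (real n - 1) * (real n + 3)" "0 < (real n)\<^sup>2 / 2"
    using n by linarith+
  have eq: "1 - mu_m n t = 4 * real t / ((real n - 1) * (real n + 3 + s))"
    unfolding s_def by (rule one_minus_mu_m_eq[OF assms])
  have "real t / (real n)\<^sup>2 = 4 * real t / (4 * (real n)\<^sup>2)" by simp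
  also have "\<dots> \<le> 4 * real t / ((real n - 1) * (2 * (real n + 3)))"
    using n d by (intro frac_le) auto
  also have "\<dots> \<le> 1 - mu_m n t"
    unfolding eq using n s by (intro divide_left_mono mult_left_mono mult_pos_pos) auto
  finally show "real t / (real n)\<^sup>2 \<le> 1 - mu_m n t" .
  have "1 - mu_m n t \<le> 4 * real t / ((real n - 1) * (real n + 3))"
    unfolding eq using n s by (intro divide_left_mono mult_left_mono mult_pos_pos) auto
  also have "\<dots> \<le> 4 * real t / ((real n)\<^sup>2 / 2)"
    using n d by (intro frac_le) auto
  also have "\<dots> = 8 * real t / (real n)\<^sup>2" by simp
  finally show "1 - mu_m n t \<le> 8 * real t / (real n)\<^sup>2" .
qed

lemma one_minus_mu_m_bigtheta:
  fixes t :: "nat \<Rightarrow> nat"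
  assumes "eventually (\<lambda>n. 2 \<le> n \<and> 16 * real (t n) \<le> (real n + 3)\<^sup>2) F"
  shows "(\<lambda>n. 1 - mu_m n (t n)) \<in> \<Theta>[F](\<lambda>n. real (t n) / (real n)\<^sup>2)"
proof (rule bigthetaI'[of 1 8])
  show "eventually (\<lambda>n. 1 * norm (real (t n) / (real n)\<^sup>2) \<le> norm (1 - mu_m n (t n)) \<and>
      norm (1 - mu_m n (t n)) \<le> 8 * norm (real (t n) / (real n)\<^sup>2)) F"
    using assms
  proof eventually_elim
    case (elim n)
    with one_minus_mu_m_bounds[of n "t n"] show ?case by auto
  qed
qed simp_all

lemma one_minus_mu_m_eq_scaled:
  assumes "2 \<le> n" "16 * real t \<le> (real n + 3)\<^sup>2"
  defines "r \<equiv> real t / (real n)\<^sup>2"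
  shows "1 - mu_m n t = 2 * r * (2 / ((1 - 1 / real n) *
    (1 + 3 * (1 / real n) + sqrt ((1 + 3 * (1 / real n))\<^sup>2 - 16 * r))))"
proof -
  define S where "S = sqrt ((real n + 3)\<^sup>2 - 16 * real t)"
  have n: "real n \<ge> 2" using assms(1) by simp
  have "(1 + 3 * (1 / real n))\<^sup>2 - 16 * r = ((real n + 3)\<^sup>2 - 16 * real t) / (real n)\<^sup>2"
    using n unfolding r_def by (simp add: field_simps power2_eq_square)
  then have "sqrt ((1 + 3 * (1 / real n))\<^sup>2 - 16 * r) = S / real n"
    unfolding S_def by (simp add: real_sqrt_divide)
  with n show ?thesis
    unfolding one_minus_mu_m_eq[OF assms(1,2)] S_def[symmetric] r_def
    by (simp add: field_simps power2_eq_square)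
qed

lemma one_minus_mu_m_asymp_equiv:
  fixes t :: "nat \<Rightarrow> nat"
  assumes "F \<le> at_top" and "((\<lambda>n. real (t n) / (real n)\<^sup>2) \<longlongrightarrow> 0) F"
  shows "(\<lambda>n. 1 - mu_m n (t n)) \<sim>[F] (\<lambda>n. 2 * real (t n) / (real n)\<^sup>2)"
proof -
  define r where "r n = real (t n) / (real n)\<^sup>2" for n
  define h where "h n = 2 / ((1 - 1 / real n) * (1 + 3 * (1 / real n)
      + sqrt ((1 + 3 * (1 / real n))\<^sup>2 - 16 * r n)))" for n
  have "((\<lambda>n. 1 / real n) \<longlongrightarrow> 0) F"
    using assms(1) lim_1_over_n by (rule tendsto_mono)
  then have "(h \<longlongrightarrow> 2 / ((1 - 0) * (1 + 3 * 0 + sqrt ((1 + 3 * 0)\<^sup>2 - 16 * 0)))) F"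
    unfolding h_def using assms(2) unfolding r_def[symmetric] by (intro tendsto_intros) simp_all
  then have "h \<sim>[F] (\<lambda>_. 1)"
    by (intro tendsto_imp_asymp_equiv_const) simp_all
  then have "(\<lambda>n. 2 * r n * h n) \<sim>[F] (\<lambda>n. 2 * r n * 1)"
    by (intro asymp_equiv_mult) simp_all
  moreover have "eventually (\<lambda>n. 2 \<le> n \<and> r n < 1 / 16) F"
    using filter_leD[OF assms(1) eventually_ge_at_top[of 2]] order_tendstoD(2)[OF assms(2), of "1/16"]
    unfolding r_def by (auto elim: eventually_conj)
  then have "eventually (\<lambda>n. 2 * r n * h n = 1 - mu_m n (t n)) F"
  proof eventually_elim
    case (elim n)
    then have "real n > 0" by simp
    with elim have "16 * real (t n) \<le> (real n)\<^sup>2"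
      unfolding r_def by (simp add: field_simps)
    also have "\<dots> \<le> (real n + 3)\<^sup>2" by (rule power_mono) simp_all
    finally show ?case
      unfolding h_def r_def using elim one_minus_mu_m_eq_scaled by simp
  qed
  ultimately show ?thesis
    by (rule asymp_equiv_transfer) (simp add: r_def)
qed

lemma filterlim_real_powr_at_top:
  assumes "0 < \<alpha>"
  shows "filterlim (\<lambda>n. real n powr \<alpha>) at_top at_top"
proof -
  have "((\<lambda>n. real n powr (- \<alpha>)) \<longlongrightarrow> 0) at_top"
    using tendsto_neg_powr[OF _ filterlim_real_sequentially, of "- \<alpha>"] assms by simp
  then have "filterlim (\<lambda>n. inverse (real n powr (- \<alpha>))) at_top at_top"
    by (rule filterlim_inverse_at_top) (simp add: eventually_at_top_linorder exI[of _ 1])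
  then show ?thesis by (simp add: powr_minus)
qed

lemma nat_floor_asymp_equiv:
  assumes "filterlim f at_top F"
  shows "(\<lambda>x. real (nat \<lfloor>f x\<rfloor>)) \<sim>[F] f"
proof (rule asymp_equivI')
  have "eventually (\<lambda>x. 0 < f x) F"
    using assms unfolding filterlim_at_top_dense by blast
  then have bounds: "eventually (\<lambda>x. 1 - inverse (f x) \<le> real (nat \<lfloor>f x\<rfloor>) / f x
      \<and> real (nat \<lfloor>f x\<rfloor>) / f x \<le> 1) F"
  proof eventually_elim
    case (elim x)
    then have "real (nat \<lfloor>f x\<rfloor>) = of_int \<lfloor>f x\<rfloor>" by simp
    with floor_correct[of "f x"] have "f x - 1 \<le> real (nat \<lfloor>f x\<rfloor>)" "real (nat \<lfloor>f x\<rfloor>) \<le> f x"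
      by linarith+
    moreover have "1 - inverse (f x) = (f x - 1) / f x" using elim by (simp add: field_simps)
    ultimately show ?case
      using elim divide_right_mono[of "f x - 1" "real (nat \<lfloor>f x\<rfloor>)" "f x"] by simp
  qed
  have lim: "((\<lambda>x. 1 - inverse (f x)) \<longlongrightarrow> 1) F"
    using tendsto_diff[OF tendsto_const tendsto_inverse_0_at_top[OF assms], of 1] by simp
  show "((\<lambda>x. real (nat \<lfloor>f x\<rfloor>) / f x) \<longlongrightarrow> 1) F"
    by (rule tendsto_sandwich[OF eventually_mono[OF bounds] eventually_mono[OF bounds] lim tendsto_const])
      simp_all
qed

lemma floor_powr_div_square_bigtheta:
  assumes "c > 0" "eventually (\<lambda>n. 1 \<le> nat \<lfloor>c * real n powr \<alpha>\<rfloor>) F"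
  shows "(\<lambda>n. real (nat \<lfloor>c * real n powr \<alpha>\<rfloor>) / (real n)\<^sup>2) \<in> \<Theta>[F](\<lambda>n. real n powr (\<alpha> - 2))"
proof (rule bigthetaI'[of "c / 2" c])
  show "eventually (\<lambda>n. c / 2 * norm (real n powr (\<alpha> - 2))
      \<le> norm (real (nat \<lfloor>c * real n powr \<alpha>\<rfloor>) / (real n)\<^sup>2)
    \<and> norm (real (nat \<lfloor>c * real n powr \<alpha>\<rfloor>) / (real n)\<^sup>2) \<le> c * norm (real n powr (\<alpha> - 2))) F"
    using assms(2)
  proof eventually_elim
    case (elim n)
    define x where "x = c * real n powr \<alpha>"
    have "n > 0" using elim by (auto intro!: Nat.gr0I)
    then have pw: "c * real n powr (\<alpha> - 2) = x / (real n)\<^sup>2"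
      unfolding x_def by (simp add: powr_diff)
    have "x \<ge> 0" unfolding x_def using assms(1) by simp
    then have "real (nat \<lfloor>x\<rfloor>) = of_int \<lfloor>x\<rfloor>" by simp
    with elim floor_correct[of x] have "x / 2 \<le> real (nat \<lfloor>x\<rfloor>)" "real (nat \<lfloor>x\<rfloor>) \<le> x"
      unfolding x_def[symmetric] by linarith+
    moreover have "c / 2 * norm (real n powr (\<alpha> - 2)) = x / 2 / (real n)\<^sup>2"
      "c * norm (real n powr (\<alpha> - 2)) = x / (real n)\<^sup>2"
      using pw assms(1) by simp_all
    ultimately show ?case
      unfolding x_def[symmetric]
      using divide_right_mono[of "x / 2" "real (nat \<lfloor>x\<rfloor>)" "(real n)\<^sup>2"]
        divide_right_mono[of "real (nat \<lfloor>x\<rfloor>)" x "(real n)\<^sup>2"]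
      by simp
  qed
qed (use assms in simp_all)

lemma one_minus_mu_m_floor_powr_asymp_equiv:
  assumes "c > 0" "0 < \<alpha>" "\<alpha> < 2" "F \<le> at_top"
  shows "(\<lambda>n. 1 - mu_m n (nat \<lfloor>c * real n powr \<alpha>\<rfloor>)) \<sim>[F] (\<lambda>n. 2 * c * real n powr (\<alpha> - 2))"
proof -
  define x where "x n = c * real n powr \<alpha>" for n :: nat
  define T where "T n = real (nat \<lfloor>x n\<rfloor>)" for n
  have "filterlim x at_top F"
    unfolding x_def using filterlim_real_powr_at_top[OF assms(2)]
    by (rule filterlim_mono[OF filterlim_tendsto_pos_mult_at_top[OF tendsto_const assms(1)]
          order_refl assms(4)])
  then have T_equiv: "T \<sim>[F] x"
    unfolding T_def by (rule nat_floor_asymp_equiv)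
  have x_div: "eventually (\<lambda>n. x n / (real n)\<^sup>2 = c * real n powr (\<alpha> - 2)) F"
    using filter_leD[OF assms(4) eventually_gt_at_top[of 0]]
    by eventually_elim (simp add: x_def powr_diff)
  have "((\<lambda>n. real n powr (\<alpha> - 2)) \<longlongrightarrow> 0) at_top"
    using tendsto_neg_powr[OF _ filterlim_real_sequentially, of "\<alpha> - 2"] assms(3) by simp
  then have "((\<lambda>n. c * real n powr (\<alpha> - 2)) \<longlongrightarrow> 0) F"
    using tendsto_mult_right_zero tendsto_mono[OF assms(4)] by blast
  then have "((\<lambda>n. x n / (real n)\<^sup>2) \<longlongrightarrow> 0) F"
    using x_div by (simp add: tendsto_cong)
  moreover have T_div: "(\<lambda>n. T n / (real n)\<^sup>2) \<sim>[F] (\<lambda>n. x n / (real n)\<^sup>2)"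
    by (rule asymp_equiv_divide[OF T_equiv asymp_equiv_refl])
  ultimately have "((\<lambda>n. T n / (real n)\<^sup>2) \<longlongrightarrow> 0) F"
    by (rule asymp_equiv_tendsto_transfer[OF asymp_equiv_symI, rotated])
  then have "(\<lambda>n. 1 - mu_m n (nat \<lfloor>x n\<rfloor>)) \<sim>[F] (\<lambda>n. 2 * T n / (real n)\<^sup>2)"
    unfolding T_def by (rule one_minus_mu_m_asymp_equiv[OF assms(4)])
  also have "\<dots> = (\<lambda>n. 2 * (T n / (real n)\<^sup>2))" by simp
  also have "\<dots> \<sim>[F] (\<lambda>n. 2 * (x n / (real n)\<^sup>2))"
    by (rule asymp_equiv_mult[OF asymp_equiv_refl T_div])
  also have "\<dots> \<sim>[F] (\<lambda>n. 2 * c * real n powr (\<alpha> - 2))"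
    by (rule asymp_equiv_refl_ev) (use x_div in \<open>auto elim: eventually_mono\<close>)
  finally show ?thesis unfolding x_def .
qed

theorem theorem3p4:
  fixes c \<alpha> :: real
  assumes "c > 0" and "0 \<le> \<alpha>" and "\<alpha> \<le> 1"
  defines "T \<equiv> (\<lambda>n::nat. nat \<lfloor>c * real n powr \<alpha>\<rfloor>)"
  defines "F \<equiv> inf at_top (principal {n::nat. 2 \<le> n \<and> 1 \<le> T n \<and> 2 * real (T n) \<le> real n + 1})"
  shows "(\<forall>n::nat. \<forall>M. 2 \<le> n \<longrightarrow> 1 \<le> T n \<longrightarrow> 2 * real (T n) \<le> real n + 1 \<longrightarrow>
            is_matching n (T n) M \<longrightarrow>
            largest_eigenvalue_on (Kedges n - M) (Pmat n) (mu_m n (T n)))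
       \<and> (\<lambda>n. 1 - mu_m n (T n)) \<in> \<Theta>[F](\<lambda>n. real n powr (\<alpha> - 2))
       \<and> (0 < \<alpha> \<and> \<alpha> < 1 \<longrightarrow> (\<lambda>n. 1 - mu_m n (T n)) \<sim>[F] (\<lambda>n. 2 * c * real n powr (\<alpha> - 2)))
       \<and> (\<lambda>n. 1 / (1 - mu_m n (T n))) \<in> \<Theta>[F](\<lambda>n. real n powr (2 - \<alpha>))"
proof -
  have F_le: "F \<le> at_top"
    and F_ev: "eventually (\<lambda>n. 2 \<le> n \<and> 1 \<le> T n \<and> 2 * real (T n) \<le> real n + 1) F"
    unfolding F_def by (simp_all add: eventually_inf_principal)
  have "eventually (\<lambda>n. 2 \<le> n \<and> 16 * real (T n) \<le> (real n + 3)\<^sup>2) F"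
    using F_ev by (rule eventually_mono) (simp add: mu_m_radicand_nonneg)
  then have "(\<lambda>n. 1 - mu_m n (T n)) \<in> \<Theta>[F](\<lambda>n. real (T n) / (real n)\<^sup>2)"
    by (rule one_minus_mu_m_bigtheta)
  moreover have "(\<lambda>n. real (T n) / (real n)\<^sup>2) \<in> \<Theta>[F](\<lambda>n. real n powr (\<alpha> - 2))"
    unfolding T_def using assms(1) eventually_mono[OF F_ev[unfolded T_def]]
    by (rule floor_powr_div_square_bigtheta) simp
  ultimately have theta: "(\<lambda>n. 1 - mu_m n (T n)) \<in> \<Theta>[F](\<lambda>n. real n powr (\<alpha> - 2))"
    by (rule landau_theta.trans)
  then have "(\<lambda>n. inverse (1 - mu_m n (T n))) \<in> \<Theta>[F](\<lambda>n. inverse (real n powr (\<alpha> - 2)))"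
    by (subst bigtheta_inverse)
  moreover have "inverse (real n powr (\<alpha> - 2)) = real n powr (2 - \<alpha>)" for n
    by (simp flip: powr_minus)
  ultimately have "(\<lambda>n. 1 / (1 - mu_m n (T n))) \<in> \<Theta>[F](\<lambda>n. real n powr (2 - \<alpha>))"
    by (simp add: inverse_eq_divide)
  moreover have "0 < \<alpha> \<and> \<alpha> < 1 \<longrightarrow>
      (\<lambda>n. 1 - mu_m n (T n)) \<sim>[F] (\<lambda>n. 2 * c * real n powr (\<alpha> - 2))"
    unfolding T_def using one_minus_mu_m_floor_powr_asymp_equiv[OF assms(1) _ _ F_le] by simp
  ultimately show ?thesis
    using theta largest_eigenvalue_on_Kedges_minus_matching unfolding T_def by blast
qed

end
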